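(* Consider the algorithm (Laplacian differentially private consensus) described in the context. Define the scalar random variable $$\theta_\infty=\mathrm{Ave}(\theta_0)+\sum_{i=1}^n\frac{s_i}{n}\sum_{j=0}^\infty\eta_i(j).$$ Then the series $\sum_{j=0}^\infty\eta_i(j)$ converges almost surely for every $i$ (so $\theta_\infty$ is well defined a.s.), and $\theta(k)\to\theta_\infty\mathbf{1}_n$ almost surely as $k\to\infty$, for every initial state $\theta_0\in\mathbb{R}^n$.
   Context: $n$ agents communicate over an undirected connected weighted graph with symmetric nonnegative adjacency matrix $A$, weighted degree matrix $D=\mathrm{diag}(A\mathbf{1}_n)$, Laplacian $L=D-A$, and maximal weighted degree $d_{\max}$. $\mathrm{Ave}(x)=\frac1n\mathbf{1}_n^Tx$. The algorithm is $$\theta(k+1)=\theta(k)-hLx(k)+S\eta(k),\qquad x(k)=\theta(k)+\eta(k),\qquad \theta(0)=\theta_0,$$ where $0<h<1/d_{\max}$, $S=\mathrm{diag}(s_1,\dots,s_n)$ with $s_i\in(0,2)$, and the noises $\eta_i(k)$, $i\in\{1,\dots,n\}$, $k\in\mathbb{Z}_{\ge0}$, are mutually independent with $\eta_i(k)\sim\mathrm{Lap}(b_i(k))$ (zero-mean Laplace with density $\frac{1}{2b}e^{-|x|/b}$), $b_i(k)=c_iq_i^k$, $c_i>0$, $q_i\in(|s_i-1|,1)$. *)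

theory Defs
  imports "HOL-Probability.Probability"
begin

text \<open>Agents are indexed by 0..n-1; vectors in R^n are functions nat => real
  (only the entries with index < n matter); matrices are nat => nat => real.\<close>

definition wdeg :: "nat \<Rightarrow> (nat \<Rightarrow> nat \<Rightarrow> real) \<Rightarrow> nat \<Rightarrow> real" where
  "wdeg n A i = (\<Sum>j<n. A i j)"

definition dmax :: "nat \<Rightarrow> (nat \<Rightarrow> nat \<Rightarrow> real) \<Rightarrow> real" where
  "dmax n A = Max (wdeg n A ` {..<n})"

definition laplacian :: "nat \<Rightarrow> (nat \<Rightarrow> nat \<Rightarrow> real) \<Rightarrow> nat \<Rightarrow> nat \<Rightarrow> real" where
  "laplacian n A i j = (if i = j then wdeg n A i else 0) - A i j"

definition connected_wgraph :: "nat \<Rightarrow> (nat \<Rightarrow> nat \<Rightarrow> real) \<Rightarrow> bool" where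
  "connected_wgraph n A \<longleftrightarrow>
     (\<forall>i<n. \<forall>j<n. A i j = A j i \<and> 0 \<le> A i j) \<and>
     (\<forall>i<n. \<forall>j<n. (i, j) \<in> {(a, b). a < n \<and> b < n \<and> 0 < A a b}\<^sup>*)"

definition Ave :: "nat \<Rightarrow> (nat \<Rightarrow> real) \<Rightarrow> real" where
  "Ave n x = (\<Sum>i<n. x i) / real n"

definition lap_density :: "real \<Rightarrow> real \<Rightarrow> real" where
  "lap_density b x = exp (- \<bar>x\<bar> / b) / (2 * b)"

text \<open>The state of the algorithm for a given realization eta (eta i k = eta_i(k)):
  theta(k+1) = theta(k) - h L x(k) + S eta(k),  x(k) = theta(k) + eta(k).\<close>
primrec dp_theta :: "nat \<Rightarrow> (nat \<Rightarrow> nat \<Rightarrow> real) \<Rightarrow> real \<Rightarrow> (nat \<Rightarrow> real)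
    \<Rightarrow> (nat \<Rightarrow> real) \<Rightarrow> (nat \<Rightarrow> nat \<Rightarrow> real) \<Rightarrow> nat \<Rightarrow> nat \<Rightarrow> real" where
  "dp_theta n A h s theta0 eta 0 = theta0"
| "dp_theta n A h s theta0 eta (Suc k) =
     (\<lambda>i. dp_theta n A h s theta0 eta k i
          - h * (\<Sum>j<n. laplacian n A i j * (dp_theta n A h s theta0 eta k j + eta j k))
          + s i * eta i k)"

end

theory Submission
  imports Defs
begin

text \<open>Since \<open>E|\<eta>\<^sub>i(k)| = c\<^sub>i q\<^sub>i\<^sup>k\<close> is summable, the noise series converge absolutely almost
  surely; the rest of the argument is deterministic. Writing \<open>P = I - hL\<close>, the iteration is
  \<open>\<theta>(k+1) = P \<theta>(k) + u(k)\<close> with \<open>u(k) = S\<eta>(k) - hL\<eta>(k) \<rightarrow> 0\<close>. The Laplacian has zero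
  column sums, so the average of \<open>\<theta>(k)\<close> changes only by the injected noise and converges
  to \<open>\<theta>\<^sub>\<infinity>\<close>. The matrix \<open>P\<close> is stochastic with positive diagonal and positive entries along
  the edges of a connected graph, so some power \<open>P\<^sup>m\<close> has all entries at least some
  \<open>\<epsilon> > 0\<close>; hence every \<open>m\<close> steps the spread \<open>max \<theta> - min \<theta>\<close> shrinks by the factor
  \<open>1 - 2\<epsilon>\<close> up to the vanishing inputs, and it tends to \<open>0\<close>.\<close>

section \<open>Absolute moments of Laplace noise\<close>

lemma lap_density_abs_moment:
  assumes b: "0 < b"
  shows "(\<integral>\<^sup>+x. ennreal (lap_density b x) * ennreal \<bar>x\<bar> \<partial>lborel) = ennreal b"
proof -
  define g where "g x = ennreal (erlang_density 0 (1 / b) x * x ^ 1 / 2)" for x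
  have g_meas: "g \<in> borel_measurable borel" unfolding g_def by measurable
  have g_moment: "(\<integral>\<^sup>+x. g x \<partial>lborel) = ennreal (b / 2)"
  proof -
    have "(\<integral>\<^sup>+x. g x \<partial>lborel) = (\<integral>\<^sup>+x. ennreal (erlang_density 0 (1 / b) x * x ^ 1) / 2 \<partial>lborel)"
      using b by (intro nn_integral_cong) (auto simp: g_def ennreal_divide_numeral erlang_density_def)
    also have "\<dots> = ennreal b / 2"
      using nn_integral_erlang_ith_moment[of "1 / b" 0 1] b by (simp add: nn_integral_divide)
    finally show ?thesis using b by (simp add: ennreal_divide_numeral)
  qed
  have g_reflect: "(\<integral>\<^sup>+x. g (- x) \<partial>lborel) = (\<integral>\<^sup>+x. g x \<partial>lborel)"
    using nn_integral_real_affine[OF g_meas, of "-1" 0] by simp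
  \<comment> \<open>\<open>|x|\<close> times the Laplace density symmetrises \<open>x\<close> times the exponential density of mean \<open>b\<close>\<close>
  have split: "ennreal (lap_density b x) * ennreal \<bar>x\<bar> = g x + g (- x)" for x
    using b by (cases "x < 0"; cases "x = 0")
      (auto simp: g_def lap_density_def erlang_density_def ennreal_mult''[symmetric] field_simps)
  have "(\<integral>\<^sup>+x. ennreal (lap_density b x) * ennreal \<bar>x\<bar> \<partial>lborel)
      = (\<integral>\<^sup>+x. g x \<partial>lborel) + (\<integral>\<^sup>+x. g (- x) \<partial>lborel)"
    unfolding split using g_meas by (simp add: nn_integral_add)
  also have "\<dots> = ennreal b"
    using b by (simp add: g_reflect g_moment ennreal_plus[symmetric] del: ennreal_plus)
  finally show ?thesis .
qed

lemma AE_summable_if_abs_moments_summable: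
  fixes X :: "nat \<Rightarrow> 'a \<Rightarrow> real"
  assumes meas: "\<And>k. X k \<in> borel_measurable M"
    and moment: "\<And>k. (\<integral>\<^sup>+\<omega>. ennreal \<bar>X k \<omega>\<bar> \<partial>M) = ennreal (B k)"
    and B: "\<And>k. 0 \<le> B k" "summable B"
  shows "AE \<omega> in M. summable (\<lambda>k. X k \<omega>)"
proof -
  have "(\<integral>\<^sup>+\<omega>. (\<Sum>k. ennreal \<bar>X k \<omega>\<bar>) \<partial>M) = (\<Sum>k. ennreal (B k))"
    using meas by (subst nn_integral_suminf) (auto simp: moment)
  also have "\<dots> = ennreal (\<Sum>k. B k)"
    using B by (intro suminf_ennreal2) auto
  finally have "AE \<omega> in M. (\<Sum>k. ennreal \<bar>X k \<omega>\<bar>) \<noteq> \<infinity>"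
    using meas by (intro nn_integral_noteq_infinite) auto
  then show ?thesis
  proof eventually_elim
    fix \<omega> assume "(\<Sum>k. ennreal \<bar>X k \<omega>\<bar>) \<noteq> \<infinity>"
    then have "summable (\<lambda>k. \<bar>X k \<omega>\<bar>)"
      by (intro summable_suminf_not_top) auto
    then show "summable (\<lambda>k. X k \<omega>)"
      by (rule summable_rabs_cancel)
  qed
qed

lemma AE_summable_Laplace_geometric:
  fixes X :: "nat \<Rightarrow> 'a \<Rightarrow> real"
  assumes "0 < c" "0 < q" "q < 1"
    and distr: "\<And>k. distributed M lborel (X k) (\<lambda>x. ennreal (lap_density (c * q ^ k) x))"
  shows "AE \<omega> in M. summable (\<lambda>k. X k \<omega>)"
proof (rule AE_summable_if_abs_moments_summable)
  show "X k \<in> borel_measurable M" for k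
    using distributed_measurable[OF distr] by (metis measurable_lborel1)
  show "(\<integral>\<^sup>+\<omega>. ennreal \<bar>X k \<omega>\<bar> \<partial>M) = ennreal (c * q ^ k)" for k
    using distributed_nn_integral[OF distr[of k], of "\<lambda>x. ennreal \<bar>x\<bar>"] lap_density_abs_moment[of "c * q ^ k"]
      assms(1,2) by simp
  show "0 \<le> c * q ^ k" for k
    using assms(1,2) by simp
  show "summable (\<lambda>k. c * q ^ k)"
    using assms(2,3) by (intro summable_mult summable_geometric) simp
qed

section \<open>Sequences contracting with a delay\<close>

lemma delayed_contraction_iterate:
  fixes a :: "nat \<Rightarrow> real"
  assumes contr: "\<And>k. K \<le> k \<Longrightarrow> a (k + m) \<le> r * a k + \<beta>"
    and r: "0 \<le> r" "r < 1" and "0 \<le> \<beta>" and "K \<le> k"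
  shows "a (k + m * t) \<le> r ^ t * a k + \<beta> / (1 - r)"
proof (induction t)
  case 0
  show ?case using assms by simp
next
  case (Suc t)
  have "a (k + m * Suc t) \<le> r * a (k + m * t) + \<beta>"
    using contr[of "k + m * t"] \<open>K \<le> k\<close> by (simp add: algebra_simps)
  also have "\<dots> \<le> r * (r ^ t * a k + \<beta> / (1 - r)) + \<beta>"
    using Suc.IH r by (intro add_right_mono mult_left_mono) auto
  also have "\<dots> = r ^ Suc t * a k + \<beta> / (1 - r)"
    using r by (simp add: field_simps)
  finally show ?case .
qed

lemma delayed_contraction_tendsto_zero:
  fixes a b :: "nat \<Rightarrow> real"
  assumes a: "\<And>k. 0 \<le> a k" and contr: "\<And>k. a (k + m) \<le> r * a k + b k"
    and r: "0 \<le> r" "r < 1" and m: "0 < m" and b: "b \<longlonglongrightarrow> 0"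
  shows "a \<longlonglongrightarrow> 0"
proof (rule LIMSEQ_I)
  fix e :: real assume e: "0 < e"
  define \<beta> where "\<beta> = e / 2 * (1 - r)"
  have \<beta>: "0 < \<beta>" "\<beta> / (1 - r) = e / 2"
    using e r unfolding \<beta>_def by (auto simp: field_simps)
  obtain K where K: "\<And>k. K \<le> k \<Longrightarrow> b k < \<beta>"
    using LIMSEQ_D[OF b \<beta>(1)] by (auto simp: abs_less_iff)
  define C where "C = (\<Sum>j<m. a (K + j))"
  have "(\<lambda>t. r ^ t * C) \<longlonglongrightarrow> 0"
    using r by (intro tendsto_mult_left_zero LIMSEQ_power_zero) simp
  then obtain T where "\<forall>t\<ge>T. norm (r ^ t * C - 0) < e / 2"
    using LIMSEQ_D e half_gt_zero by blast
  then have T: "\<And>t. T \<le> t \<Longrightarrow> r ^ t * C < e / 2"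
    by (auto simp: abs_less_iff)
  show "\<exists>k0. \<forall>k\<ge>k0. norm (a k - 0) < e"
  proof (intro exI allI impI)
    fix k assume k: "K + m * T \<le> k"
    define t j where "t = (k - K) div m" and "j = (k - K) mod m"
    have k_eq: "k = (K + j) + m * t" and "j < m"
      using k m mod_mult_div_eq[of "k - K" m] by (auto simp: t_def j_def)
    have "T \<le> t"
      using k m div_le_mono[of "m * T" "k - K" m] by (simp add: t_def)
    have "a (k' + m) \<le> r * a k' + \<beta>" if "K \<le> k'" for k'
      using contr[of k'] K[OF that] by linarith
    then have "a k \<le> r ^ t * a (K + j) + e / 2"
      unfolding k_eq using delayed_contraction_iterate[of K a m r \<beta> "K + j" t] r \<beta> by simp
    also have "r ^ t * a (K + j) \<le> r ^ t * C"
      unfolding C_def using \<open>j < m\<close> a r by (intro mult_left_mono member_le_sum) auto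
    finally show "norm (a k - 0) < e"
      using T[OF \<open>T \<le> t\<close>] a by simp
  qed
qed

section \<open>The spread of a vector\<close>

definition spread :: "nat \<Rightarrow> (nat \<Rightarrow> real) \<Rightarrow> real" where
  "spread n v = Max (v ` {..<n}) - Min (v ` {..<n})"

lemma spread_witnesses:
  assumes "0 < n"
  obtains i j where "i < n" "j < n" "spread n v = v i - v j" "\<And>l. l < n \<Longrightarrow> v j \<le> v l \<and> v l \<le> v i"
proof -
  have ne: "v ` {..<n} \<noteq> {}" and fin: "finite (v ` {..<n})"
    using assms by auto
  obtain i where "i < n" "v i = Max (v ` {..<n})"
    using Max_in[OF fin ne] by auto
  moreover obtain j where "j < n" "v j = Min (v ` {..<n})"
    using Min_in[OF fin ne] by auto
  ultimately show ?thesis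
    using that[of i j] by (simp add: spread_def)
qed

lemma spread_nonneg:
  assumes "0 < n"
  shows "0 \<le> spread n v"
proof -
  obtain i j where "i < n" "spread n v = v i - v j" "\<And>l. l < n \<Longrightarrow> v j \<le> v l \<and> v l \<le> v i"
    using spread_witnesses[OF assms] by metis
  then show ?thesis
    by force
qed

lemma abs_minus_Ave_le_spread:
  assumes "0 < n" "i < n"
  shows "\<bar>v i - Ave n v\<bar> \<le> spread n v"
proof -
  obtain iM jm where w: "spread n v = v iM - v jm" "\<And>l. l < n \<Longrightarrow> v jm \<le> v l \<and> v l \<le> v iM"
    using spread_witnesses[OF assms(1)] by metis
  have "real n * v jm \<le> (\<Sum>l<n. v l)" "(\<Sum>l<n. v l) \<le> real n * v iM"
    using sum_bounded_below[of "{..<n}" "v jm" v] sum_bounded_above[of "{..<n}" v "v iM"] w(2) by auto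
  then have "v jm \<le> Ave n v" "Ave n v \<le> v iM"
    using assms(1) by (simp_all add: Ave_def field_simps)
  then show ?thesis
    using w(1) w(2)[OF assms(2)] by (auto simp: abs_le_iff)
qed

lemma spread_perturb:
  assumes "0 < n" and close: "\<And>i. i < n \<Longrightarrow> \<bar>w i - v i\<bar> \<le> B"
  shows "spread n w \<le> spread n v + 2 * B"
proof -
  obtain i j where w: "i < n" "j < n" "spread n w = w i - w j"
    using spread_witnesses[OF assms(1)] by metis
  obtain iM jm where v: "spread n v = v iM - v jm" "\<And>l. l < n \<Longrightarrow> v jm \<le> v l \<and> v l \<le> v iM"
    using spread_witnesses[OF assms(1)] by metis
  show ?thesis
    using close[OF w(1)] close[OF w(2)] v(2)[OF w(1)] v(2)[OF w(2)] w(3) v(1) by (simp add: abs_le_iff)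
qed

lemma spread_contraction:
  assumes "0 < n"
    and mixing: "\<And>v i j. (\<And>l. l < n \<Longrightarrow> 0 \<le> v l) \<Longrightarrow> i < n \<Longrightarrow> j < n \<Longrightarrow> \<epsilon> * v j \<le> W v i"
    and affine: "\<And>a b v i. i < n \<Longrightarrow> W (\<lambda>j. a * v j + b) i = a * W v i + b"
  shows "spread n (W v) \<le> (1 - 2 * \<epsilon>) * spread n v"
proof -
  obtain iM jm where v: "iM < n" "jm < n" "spread n v = v iM - v jm"
    "\<And>l. l < n \<Longrightarrow> v jm \<le> v l \<and> v l \<le> v iM"
    using spread_witnesses[OF assms(1)] by metis
  obtain i j where Wv: "i < n" "j < n" "spread n (W v) = W v i - W v j"
    using spread_witnesses[OF assms(1)] by metis
  have "W v i \<le> v iM - \<epsilon> * (v iM - v jm)"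
    using mixing[of "\<lambda>l. (- 1) * v l + v iM" i jm] affine[of i "- 1" v "v iM"] v Wv by simp
  moreover have "v jm + \<epsilon> * (v iM - v jm) \<le> W v j"
    using mixing[of "\<lambda>l. 1 * v l + (- v jm)" j iM] affine[of j 1 v "- v jm"] v Wv by simp
  ultimately show ?thesis
    unfolding v(3) Wv(3) by (simp add: algebra_simps)
qed

section \<open>Perturbed iteration of a stochastic matrix\<close>

definition mat_vec :: "nat \<Rightarrow> (nat \<Rightarrow> nat \<Rightarrow> real) \<Rightarrow> (nat \<Rightarrow> real) \<Rightarrow> nat \<Rightarrow> real" where
  "mat_vec n P v i = (\<Sum>j<n. P i j * v j)"

lemma mat_vec_cong_add:
  assumes "\<And>j. j < n \<Longrightarrow> w j = v j + r j"
  shows "mat_vec n P w i = mat_vec n P v i + mat_vec n P r i"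
  using assms by (simp add: mat_vec_def distrib_left sum.distrib)

locale row_stochastic =
  fixes n :: nat and P :: "nat \<Rightarrow> nat \<Rightarrow> real"
  assumes entries_nonneg: "\<And>i j. i < n \<Longrightarrow> j < n \<Longrightarrow> 0 \<le> P i j"
    and row_sum: "\<And>i. i < n \<Longrightarrow> (\<Sum>j<n. P i j) = 1"
begin

lemma mat_vec_ge_entry:
  assumes "\<And>l. l < n \<Longrightarrow> 0 \<le> v l" "i < n" "j < n"
  shows "P i j * v j \<le> mat_vec n P v i"
  unfolding mat_vec_def using assms by (intro member_le_sum) (auto intro!: mult_nonneg_nonneg entries_nonneg)

lemma funpow_mat_vec_nonneg:
  assumes "\<And>l. l < n \<Longrightarrow> 0 \<le> v l" "i < n"
  shows "0 \<le> (mat_vec n P ^^ k) v i"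
  using assms(2)
proof (induction k arbitrary: i)
  case (Suc k)
  then show ?case
    by (auto simp: mat_vec_def intro!: sum_nonneg mult_nonneg_nonneg entries_nonneg)
qed (use assms(1) in simp)

lemma funpow_mat_vec_affine:
  "i < n \<Longrightarrow> (mat_vec n P ^^ k) (\<lambda>j. a * v j + b) i = a * (mat_vec n P ^^ k) v i + b"
proof (induction k arbitrary: i)
  case (Suc k)
  have "(mat_vec n P ^^ Suc k) (\<lambda>j. a * v j + b) i = (\<Sum>j<n. P i j * (mat_vec n P ^^ k) (\<lambda>j. a * v j + b) j)"
    by (simp only: funpow.simps comp_apply mat_vec_def)
  also have "\<dots> = (\<Sum>j<n. P i j * (a * (mat_vec n P ^^ k) v j + b))"
    by (intro sum.cong) (simp_all add: Suc.IH)
  also have "\<dots> = a * (\<Sum>j<n. P i j * (mat_vec n P ^^ k) v j) + b * (\<Sum>j<n. P i j)"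
    by (simp add: sum.distrib sum_distrib_left algebra_simps)
  also have "\<dots> = a * (mat_vec n P ^^ Suc k) v i + b"
    using row_sum[OF Suc.prems] by (simp only: funpow.simps comp_apply mat_vec_def mult_1_right)
  finally show ?case .
qed simp

lemma abs_mat_vec_le:
  assumes "\<And>j. j < n \<Longrightarrow> \<bar>v j\<bar> \<le> B" "i < n"
  shows "\<bar>mat_vec n P v i\<bar> \<le> B"
proof -
  have "\<bar>mat_vec n P v i\<bar> \<le> (\<Sum>j<n. P i j * B)"
    unfolding mat_vec_def using assms entries_nonneg
    by (intro order.trans[OF sum_abs] sum_mono) (auto simp: abs_mult intro!: mult_left_mono)
  also have "\<dots> = B"
    using row_sum[OF assms(2)] by (simp add: sum_distrib_right[symmetric])
  finally show ?thesis .
qed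

text \<open>\<open>P\<close> does not increase the sup norm, so over \<open>l\<close> steps the accumulated
  perturbation is bounded by the total size of the inputs.\<close>

lemma perturbed_iterate:
  assumes step: "\<And>k i. i < n \<Longrightarrow> x (Suc k) i = mat_vec n P (x k) i + u k i"
  shows "\<exists>r. (\<forall>i<n. x (k + l) i = (mat_vec n P ^^ l) (x k) i + r i)
            \<and> (\<forall>i<n. \<bar>r i\<bar> \<le> (\<Sum>t<l. \<Sum>j<n. \<bar>u (k + t) j\<bar>))"
proof (induction l)
  case 0
  show ?case
    by (intro exI[of _ "\<lambda>_. 0"]) (simp add: sum_nonneg)
next
  case (Suc l)
  then obtain r where r: "\<forall>i<n. x (k + l) i = (mat_vec n P ^^ l) (x k) i + r i"
    "\<forall>i<n. \<bar>r i\<bar> \<le> (\<Sum>t<l. \<Sum>j<n. \<bar>u (k + t) j\<bar>)"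
    by blast
  show ?case
  proof (intro exI[of _ "\<lambda>i. mat_vec n P r i + u (k + l) i"] conjI allI impI)
    fix i assume i: "i < n"
    show "x (k + Suc l) i = (mat_vec n P ^^ Suc l) (x k) i + (mat_vec n P r i + u (k + l) i)"
      using step[OF i, of "k + l"] mat_vec_cong_add[of n "x (k + l)", OF r(1)[rule_format]] by simp
    have "\<bar>u (k + l) i\<bar> \<le> (\<Sum>j<n. \<bar>u (k + l) j\<bar>)"
      using i by (intro member_le_sum) auto
    moreover have "\<bar>mat_vec n P r i\<bar> \<le> (\<Sum>t<l. \<Sum>j<n. \<bar>u (k + t) j\<bar>)"
      using abs_mat_vec_le r(2) i by blast
    ultimately show "\<bar>mat_vec n P r i + u (k + l) i\<bar> \<le> (\<Sum>t<Suc l. \<Sum>j<n. \<bar>u (k + t) j\<bar>)"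
      using abs_triangle_ineq[of "mat_vec n P r i" "u (k + l) i"] by simp
  qed
qed

end

locale connected_stochastic = row_stochastic +
  fixes \<delta> :: real and E :: "(nat \<times> nat) set"
  assumes index_nonempty: "0 < n"
    and weight_pos: "0 < \<delta>"
    and diag_weight: "\<And>i. i < n \<Longrightarrow> \<delta> \<le> P i i"
    and edge_weight: "\<And>i j. (i, j) \<in> E \<Longrightarrow> \<delta> \<le> P i j"
    and edges_within: "E \<subseteq> {..<n} \<times> {..<n}"
    and strongly_connected: "\<And>i j. i < n \<Longrightarrow> j < n \<Longrightarrow> (i, j) \<in> E\<^sup>*"
begin

lemma funpow_mat_vec_ge_path:
  assumes "(i, j) \<in> E ^^ k" "i < n" "j < n" "\<And>l. l < n \<Longrightarrow> 0 \<le> v l"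
  shows "\<delta> ^ k * v j \<le> (mat_vec n P ^^ k) v i"
  using assms
proof (induction k arbitrary: j v)
  case (Suc k)
  then obtain l where path: "(i, l) \<in> E ^^ k" and edge: "(l, j) \<in> E"
    by auto
  have l: "l < n"
    using edge edges_within by auto
  have Pv_nonneg: "\<And>l. l < n \<Longrightarrow> 0 \<le> mat_vec n P v l"
    using funpow_mat_vec_nonneg[of v _ 1] Suc.prems by simp
  have "\<delta> * v j \<le> P l j * v j"
    using edge_weight[OF edge] Suc.prems by (intro mult_right_mono) auto
  also have "\<dots> \<le> mat_vec n P v l"
    using mat_vec_ge_entry Suc.prems l by blast
  finally have "\<delta> ^ Suc k * v j \<le> \<delta> ^ k * mat_vec n P v l"
    using weight_pos by (simp add: mult.assoc mult_left_mono)
  also have "\<dots> \<le> (mat_vec n P ^^ k) (mat_vec n P v) i"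
    using Suc.IH[OF path Suc.prems(2) l Pv_nonneg] .
  finally show ?case
    by (simp add: funpow_Suc_right del: funpow.simps)
qed simp

lemma funpow_mat_vec_ge_delayed:
  assumes "\<And>l. l < n \<Longrightarrow> 0 \<le> v l" "i < n" "0 \<le> c" "c \<le> (mat_vec n P ^^ k) v i"
  shows "\<delta> ^ d * c \<le> (mat_vec n P ^^ (d + k)) v i"
proof (induction d)
  case (Suc d)
  have "\<delta> ^ Suc d * c \<le> \<delta> * (mat_vec n P ^^ (d + k)) v i"
    using Suc.IH weight_pos by (simp add: mult.assoc mult_left_mono)
  also have "\<dots> \<le> P i i * (mat_vec n P ^^ (d + k)) v i"
    using diag_weight assms funpow_mat_vec_nonneg by (intro mult_right_mono) auto
  also have "\<dots> \<le> mat_vec n P ((mat_vec n P ^^ (d + k)) v) i"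
    using mat_vec_ge_entry funpow_mat_vec_nonneg assms by blast
  finally show ?case
    by simp
qed (use assms in simp)

text \<open>Paths of different lengths between different pairs are aligned to a common
  length \<open>m\<close> by waiting on self-loops, which the positive diagonal provides.\<close>

lemma funpow_mat_vec_uniformly_positive:
  obtains m where "0 < m"
    and "\<And>v i j. (\<And>l. l < n \<Longrightarrow> 0 \<le> v l) \<Longrightarrow> i < n \<Longrightarrow> j < n \<Longrightarrow> \<delta> ^ m * v j \<le> (mat_vec n P ^^ m) v i"
proof -
  have "\<forall>i j. \<exists>k. i < n \<longrightarrow> j < n \<longrightarrow> (i, j) \<in> E ^^ k"
    using strongly_connected rtrancl_power by blast
  then obtain K where K: "\<And>i j. i < n \<Longrightarrow> j < n \<Longrightarrow> (i, j) \<in> E ^^ K i j"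
    by metis
  define m where "m = Suc (\<Sum>i<n. \<Sum>j<n. K i j)"
  have K_le: "K i j \<le> m" if "i < n" "j < n" for i j
  proof -
    have "K i j \<le> (\<Sum>j<n. K i j)"
      using that by (intro member_le_sum) auto
    also have "\<dots> \<le> (\<Sum>i<n. \<Sum>j<n. K i j)"
      using that by (intro member_le_sum[of i "{..<n}" "\<lambda>i. \<Sum>j<n. K i j"]) auto
    finally show ?thesis
      unfolding m_def by simp
  qed
  show ?thesis
  proof (rule that)
    show "0 < m"
      by (simp add: m_def)
    fix v :: "nat \<Rightarrow> real" and i j
    assume v: "\<And>l. l < n \<Longrightarrow> 0 \<le> v l" and ij: "i < n" "j < n"
    have path: "\<delta> ^ K i j * v j \<le> (mat_vec n P ^^ K i j) v i"
      by (rule funpow_mat_vec_ge_path[OF K[OF ij] ij]) (rule v)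
    have "\<delta> ^ (m - K i j) * (\<delta> ^ K i j * v j) \<le> (mat_vec n P ^^ (m - K i j + K i j)) v i"
      using weight_pos v[OF ij(2)] by (intro funpow_mat_vec_ge_delayed[where v = v, OF v ij(1) _ path]) (auto intro: mult_nonneg_nonneg)
    then show "\<delta> ^ m * v j \<le> (mat_vec n P ^^ m) v i"
      using K_le[OF ij] by (simp add: power_add[symmetric] mult.assoc[symmetric])
  qed
qed

theorem spread_tendsto_zero:
  assumes step: "\<And>k i. i < n \<Longrightarrow> x (Suc k) i = mat_vec n P (x k) i + u k i"
    and vanishing: "\<And>i. i < n \<Longrightarrow> (\<lambda>k. u k i) \<longlonglongrightarrow> 0"
  shows "(\<lambda>k. spread n (x k)) \<longlonglongrightarrow> 0"
proof -
  obtain m where m: "0 < m" and mixing: "\<And>v i j. (\<And>l. l < n \<Longrightarrow> 0 \<le> v l) \<Longrightarrow> i < n \<Longrightarrow> j < n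
      \<Longrightarrow> \<delta> ^ m * v j \<le> (mat_vec n P ^^ m) v i"
    using funpow_mat_vec_uniformly_positive by blast
  define r where "r = max 0 (1 - 2 * \<delta> ^ m)"
  define b where "b k = 2 * (\<Sum>t<m. \<Sum>j<n. \<bar>u (k + t) j\<bar>)" for k
  have "(\<lambda>k. \<Sum>j<n. \<bar>u k j\<bar>) \<longlonglongrightarrow> (\<Sum>j<n. \<bar>0\<bar>)"
    using vanishing by (intro tendsto_intros) auto
  then have "b \<longlonglongrightarrow> 2 * (\<Sum>t<m. 0)"
    unfolding b_def by (intro tendsto_intros LIMSEQ_ignore_initial_segment) simp
  then have b_lim: "b \<longlonglongrightarrow> 0"
    by simp
  have contr: "spread n (x (k + m)) \<le> r * spread n (x k) + b k" for k
  proof -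
    obtain e where e: "\<forall>i<n. x (k + m) i = (mat_vec n P ^^ m) (x k) i + e i"
      and e_le: "\<forall>i<n. \<bar>e i\<bar> \<le> (\<Sum>t<m. \<Sum>j<n. \<bar>u (k + t) j\<bar>)"
      using perturbed_iterate[where x = x and u = u, OF step] by blast
    have "spread n (x (k + m)) \<le> spread n ((mat_vec n P ^^ m) (x k)) + b k"
      unfolding b_def using e e_le by (intro spread_perturb index_nonempty) auto
    also have "spread n ((mat_vec n P ^^ m) (x k)) \<le> (1 - 2 * \<delta> ^ m) * spread n (x k)"
      using mixing funpow_mat_vec_affine by (rule spread_contraction[OF index_nonempty])
    also have "\<dots> \<le> r * spread n (x k)"
      unfolding r_def using spread_nonneg[OF index_nonempty] by (intro mult_right_mono) auto
    finally show ?thesis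
      by simp
  qed
  show ?thesis
    by (rule delayed_contraction_tendsto_zero[OF spread_nonneg[OF index_nonempty] contr _ _ m b_lim])
      (use weight_pos in \<open>auto simp: r_def\<close>)
qed

end

section \<open>The differentially private consensus iteration\<close>

definition consensus_matrix :: "nat \<Rightarrow> (nat \<Rightarrow> nat \<Rightarrow> real) \<Rightarrow> real \<Rightarrow> nat \<Rightarrow> nat \<Rightarrow> real" where
  "consensus_matrix n A h i j = (if i = j then 1 else 0) - h * laplacian n A i j"

lemma laplacian_row_sum: "i < n \<Longrightarrow> (\<Sum>j<n. laplacian n A i j) = 0"
  by (simp add: laplacian_def sum_subtractf wdeg_def)

lemma laplacian_col_sum:
  assumes "\<And>i j. i < n \<Longrightarrow> j < n \<Longrightarrow> A i j = A j i" "j < n"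
  shows "(\<Sum>i<n. laplacian n A i j) = 0"
proof -
  have "(\<Sum>i<n. A i j) = (\<Sum>i<n. A j i)"
    using assms by (intro sum.cong) auto
  then show ?thesis
    using assms(2) by (simp add: laplacian_def sum_subtractf wdeg_def)
qed

lemma mat_vec_consensus_matrix:
  assumes "i < n"
  shows "mat_vec n (consensus_matrix n A h) v i = v i - h * (\<Sum>j<n. laplacian n A i j * v j)"
proof -
  have "(\<Sum>j<n. (if i = j then 1 else 0) * v j) = (\<Sum>j<n. if i = j then v j else 0)"
    by (intro sum.cong) auto
  then have "(\<Sum>j<n. (if i = j then 1 else 0) * v j) = v i"
    using assms by simp
  then show ?thesis
    by (simp add: mat_vec_def consensus_matrix_def left_diff_distrib sum_subtractf sum_distrib_left mult.assoc)
qed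

lemma dp_theta_Suc_eq_mat_vec:
  assumes "i < n"
  shows "dp_theta n A h s \<theta>0 e (Suc k) i = mat_vec n (consensus_matrix n A h) (dp_theta n A h s \<theta>0 e k) i
           + (s i * e i k - h * (\<Sum>j<n. laplacian n A i j * e j k))"
  using assms by (simp add: mat_vec_consensus_matrix distrib_left sum.distrib algebra_simps)

lemma sum_dp_theta:
  assumes symmetric: "\<And>i j. i < n \<Longrightarrow> j < n \<Longrightarrow> A i j = A j i"
  shows "(\<Sum>i<n. dp_theta n A h s \<theta>0 e k i) = (\<Sum>i<n. \<theta>0 i) + (\<Sum>i<n. s i * (\<Sum>t<k. e i t))"
proof (induction k)
  case (Suc k)
  have "(\<Sum>i<n. \<Sum>j<n. laplacian n A i j * y j) = 0" for y
  proof -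
    have "(\<Sum>i<n. \<Sum>j<n. laplacian n A i j * y j) = (\<Sum>j<n. (\<Sum>i<n. laplacian n A i j) * y j)"
      by (subst sum.swap) (simp add: sum_distrib_right)
    then show ?thesis
      by (simp add: laplacian_col_sum[OF symmetric])
  qed
  then show ?case
    using Suc.IH by (simp add: sum.distrib sum_subtractf sum_distrib_left[symmetric] distrib_left)
qed simp

lemma connected_stochastic_consensus_matrix:
  assumes "1 \<le> n" and graph: "connected_wgraph n A" and h: "0 < h" "h * dmax n A < 1"
  obtains \<delta> where "connected_stochastic n (consensus_matrix n A h) \<delta> {(i, j). i < n \<and> j < n \<and> 0 < A i j}"
proof -
  define E where "E = {(i, j). i < n \<and> j < n \<and> 0 < A i j}"
  define a where "a = Min (insert 1 ((\<lambda>(i, j). A i j) ` E))"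
  have finE: "finite E"
    by (rule finite_subset[of _ "{..<n} \<times> {..<n}"]) (auto simp: E_def)
  have a: "0 < a" "\<And>i j. (i, j) \<in> E \<Longrightarrow> a \<le> A i j"
    using finE by (auto simp: a_def E_def Min_gr_iff intro!: Min_le)
  have A: "\<And>i j. i < n \<Longrightarrow> j < n \<Longrightarrow> A i j = A j i \<and> 0 \<le> A i j"
    using graph by (auto simp: connected_wgraph_def)
  have diag: "1 - h * dmax n A \<le> consensus_matrix n A h i i" if "i < n" for i
  proof -
    have "wdeg n A i \<le> dmax n A"
      using that by (auto simp: dmax_def intro: Max_ge)
    then have "h * wdeg n A i \<le> h * dmax n A" "0 \<le> h * A i i"
      using A[OF that that] h by simp_all
    then show ?thesis
      by (simp add: consensus_matrix_def laplacian_def algebra_simps)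
  qed
  have off: "consensus_matrix n A h i j = h * A i j" if "i \<noteq> j" for i j
    using that by (simp add: consensus_matrix_def laplacian_def)
  show ?thesis
  proof (rule that, fold E_def, unfold_locales)
    show "0 \<le> consensus_matrix n A h i j" if "i < n" "j < n" for i j
      using diag[OF that(1)] off[of i j] A[OF that] h by (cases "i = j") auto
    show "(\<Sum>j<n. consensus_matrix n A h i j) = 1" if i: "i < n" for i
      using laplacian_row_sum[OF i, of A] i by (simp add: consensus_matrix_def sum_subtractf sum_distrib_left[symmetric])
    show "0 < min (1 - h * dmax n A) (h * a)"
      using h a by simp
    show "min (1 - h * dmax n A) (h * a) \<le> consensus_matrix n A h i i" if "i < n" for i
      using diag[OF that] by linarith
    show "min (1 - h * dmax n A) (h * a) \<le> consensus_matrix n A h i j" if "(i, j) \<in> E" for i j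
    proof (cases "i = j")
      case True
      then show ?thesis
        using diag[of i] that by (auto simp: E_def)
    next
      case False
      then show ?thesis
        using a(2)[OF that] off[of i j] h by (auto intro!: min.coboundedI2)
    qed
    show "E \<subseteq> {..<n} \<times> {..<n}"
      by (auto simp: E_def)
    show "(i, j) \<in> E\<^sup>*" if "i < n" "j < n" for i j
      using graph that by (simp add: connected_wgraph_def E_def)
  qed (use assms(1) in simp)
qed

theorem dp_theta_tendsto_if_summable_noise:
  assumes "1 \<le> n" and graph: "connected_wgraph n A" and h: "0 < h" "h * dmax n A < 1"
    and summable: "\<And>i. i < n \<Longrightarrow> summable (\<lambda>k. e i k)" and i: "i < n"
  shows "(\<lambda>k. dp_theta n A h s \<theta>0 e k i) \<longlonglongrightarrow> Ave n \<theta>0 + (\<Sum>i'<n. s i' / real n * (\<Sum>k. e i' k))"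
proof -
  let ?\<theta> = "dp_theta n A h s \<theta>0 e"
  obtain \<delta> where "connected_stochastic n (consensus_matrix n A h) \<delta> {(i, j). i < n \<and> j < n \<and> 0 < A i j}"
    using connected_stochastic_consensus_matrix[OF assms(1-4)] .
  then interpret connected_stochastic n "consensus_matrix n A h" \<delta> "{(i, j). i < n \<and> j < n \<and> 0 < A i j}" .
  define u where "u k j = s j * e j k - h * (\<Sum>l<n. laplacian n A j l * e l k)" for k j
  have "(\<lambda>k. u k j) \<longlonglongrightarrow> s j * 0 - h * (\<Sum>l<n. laplacian n A j l * 0)" if "j < n" for j
    unfolding u_def using summable that by (intro tendsto_intros summable_LIMSEQ_zero) auto
  then have spread: "(\<lambda>k. spread n (?\<theta> k)) \<longlonglongrightarrow> 0"
    by (intro spread_tendsto_zero[where u = u]) (auto simp: u_def dp_theta_Suc_eq_mat_vec simp del: dp_theta.simps(2))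
  have sums: "(\<Sum>i<n. ?\<theta> k i) = (\<Sum>i<n. \<theta>0 i) + (\<Sum>i<n. s i * (\<Sum>t<k. e i t))" for k
    using graph by (intro sum_dp_theta) (simp add: connected_wgraph_def)
  have "(\<lambda>k. Ave n (?\<theta> k)) \<longlonglongrightarrow> ((\<Sum>i<n. \<theta>0 i) + (\<Sum>i<n. s i * (\<Sum>k. e i k))) / real n"
    unfolding Ave_def sums using summable index_nonempty by (intro tendsto_intros summable_LIMSEQ) auto
  also have "((\<Sum>i<n. \<theta>0 i) + (\<Sum>i<n. s i * (\<Sum>k. e i k))) / real n
      = Ave n \<theta>0 + (\<Sum>i'<n. s i' / real n * (\<Sum>k. e i' k))"
    by (simp add: Ave_def add_divide_distrib sum_divide_distrib)
  finally have average: "(\<lambda>k. Ave n (?\<theta> k)) \<longlonglongrightarrow> Ave n \<theta>0 + (\<Sum>i'<n. s i' / real n * (\<Sum>k. e i' k))" .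
  have "(\<lambda>k. ?\<theta> k i - Ave n (?\<theta> k)) \<longlonglongrightarrow> 0"
    using abs_minus_Ave_le_spread[OF index_nonempty i] by (intro Lim_null_comparison[OF _ spread]) auto
  from tendsto_add[OF average this] show ?thesis
    by simp
qed

theorem mainTheorem2:
  fixes M :: "'a measure" and n :: nat and A :: "nat \<Rightarrow> nat \<Rightarrow> real"
    and h :: real and s c q :: "nat \<Rightarrow> real" and theta0 :: "nat \<Rightarrow> real"
    and eta :: "nat \<Rightarrow> nat \<Rightarrow> 'a \<Rightarrow> real"
  assumes "prob_space M"
    and "n \<ge> 1"
    and "connected_wgraph n A"
    and "0 < h" and "h * dmax n A < 1"
    and "\<forall>i<n. 0 < s i \<and> s i < 2"
    and "\<forall>i<n. 0 < c i"
    and "\<forall>i<n. \<bar>s i - 1\<bar> < q i \<and> q i < 1"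
    and "prob_space.indep_vars M (\<lambda>_. borel) (\<lambda>p. eta (fst p) (snd p)) ({..<n} \<times> UNIV)"
    and "\<forall>i<n. \<forall>k. distributed M lborel (eta i k)
                     (\<lambda>x. ennreal (lap_density (c i * q i ^ k) x))"
  shows "AE \<omega> in M.
           (\<forall>i<n. summable (\<lambda>j. eta i j \<omega>)) \<and>
           (\<forall>i<n. (\<lambda>k. dp_theta n A h s theta0 (\<lambda>i' k'. eta i' k' \<omega>) k i)
                  \<longlonglongrightarrow> (Ave n theta0 + (\<Sum>i'<n. s i' / real n * (\<Sum>j. eta i' j \<omega>))))"
proof -
  have "AE \<omega> in M. \<forall>i\<in>{..<n}. summable (\<lambda>j. eta i j \<omega>)"
  proof (rule AE_finite_allI)
    fix i assume "i \<in> {..<n}"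
    then show "AE \<omega> in M. summable (\<lambda>j. eta i j \<omega>)"
      using assms(7,8,10) by (intro AE_summable_Laplace_geometric[where c = "c i" and q = "q i"])
        (auto intro: le_less_trans[OF abs_ge_zero])
  qed simp
  then show ?thesis
    by eventually_elim (use dp_theta_tendsto_if_summable_noise[OF assms(2-5)] in auto)
qed

end
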